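(* For the Rayleigh fading channel, i.e. $y=hx+v$ with $v\sim\mathcal{CN}(0,1)$, perfect CSI at transmitter and receiver, and $|h|^2$ exponentially distributed with unit mean (density $e^{-t}$, $t\ge0$), and for fixed $A\ge1$, the capacity $C(\mathrm{SNR})$ under average power constraint $\mathrm{SNR}$ and peak power constraint $A\,\mathrm{SNR}$ satisfies $$\lim_{\mathrm{SNR}\to0}\frac{C(\mathrm{SNR})}{\mathrm{SNR}(1+\log A)}=1.$$
   Context: $C(\mathrm{SNR})=\sup\mathbf{E}[\log(1+P(h)|h|^2)]$ over measurable $P(h)\ge 0$ with $\mathbf{E}[P(h)]\le\mathrm{SNR}$ and $\max_hP(h)\le A\,\mathrm{SNR}$. Logarithms are natural. *)

theory Defs
  imports "HOL-Probability.Probability"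
begin

definition admissible_power :: "complex measure \<Rightarrow> real \<Rightarrow> real \<Rightarrow> (complex \<Rightarrow> real) set" where
  "admissible_power M A snr =
     {P. P \<in> borel_measurable M \<and> (\<forall>h. 0 \<le> P h) \<and> (\<forall>h. P h \<le> A * snr)
         \<and> (\<integral>h. P h \<partial>M) \<le> snr}"

definition capacity :: "complex measure \<Rightarrow> real \<Rightarrow> real \<Rightarrow> real" where
  "capacity M A snr =
     (SUP P \<in> admissible_power M A snr. \<integral>h. ln (1 + P h * (cmod h)\<^sup>2) \<partial>M)"

end

(* Write X = |h|^2, which is Exp(1)-distributed, and c = ln A, so that P(X > c) = 1/A.
   For an admissible P, ln (1 + P X) <= P X <= c P + A snr (X - c)^+, and E (X - c)^+ = 1/A,
   whence C(snr) <= snr (1 + ln A).  Conversely, the on-off allocation P = A snr on {X > c}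
   meets the average constraint with equality, and ln (1 + y) >= y - y^2 yields
   C(snr) >= A snr E[X; X > c] - (A snr)^2 E[X^2] = snr (1 + ln A) - 2 A^2 snr^2. *)

theory Submission
  imports Defs "HOL-Real_Asymp.Real_Asymp"
begin

lemma (in prob_space) exponential_distributed_excess:
  assumes D: "distributed M lborel X (exponential_density l)" and l: "0 < l" and c: "0 \<le> c"
  shows "has_bochner_integral M (\<lambda>x. max 0 (X x - c)) (exp (- c * l) / l)"
proof (rule has_bochner_integral_nn_integral)
  show "(\<lambda>x. max 0 (X x - c)) \<in> borel_measurable M"
    using distributed_measurable[OF D] by simp
  have "(\<integral>\<^sup>+x. ennreal (max 0 (X x - c)) \<partial>M)
      = (\<integral>\<^sup>+t. ennreal (exponential_density l t) * ennreal (max 0 (t - c)) \<partial>lborel)"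
    by (rule distributed_nn_integral[OF D, symmetric]) measurable
  also have "\<dots> = (\<integral>\<^sup>+t. ennreal (l * (t - c) * exp (- t * l)) * indicator {c..} t \<partial>lborel)"
    using c l
    by (intro nn_integral_cong)
       (auto simp: exponential_density_def indicator_def ennreal_mult'[symmetric]
          ennreal_eq_0_iff mult_nonneg_nonpos)
  also have "\<dots> = 0 - (- (c - c + 1 / l) * exp (- c * l))"
    using c l
    by (intro nn_integral_FTC_atLeast[where F = "\<lambda>t. - (t - c + 1 / l) * exp (- t * l)"])
       (auto intro!: derivative_eq_intros simp: field_simps, real_asymp)
  finally show "(\<integral>\<^sup>+x. ennreal (max 0 (X x - c)) \<partial>M) = ennreal (exp (- c * l) / l)"
    by simp
qed (use l in auto)

lemma (in prob_space) exponential_distributed_tail_indicator: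
  assumes D: "distributed M lborel X (exponential_density l)" and l: "0 < l" and c: "0 \<le> c"
  shows "has_bochner_integral M (indicator {x \<in> space M. c < X x}) (exp (- c * l))"
proof -
  have [measurable]: "X \<in> borel_measurable M"
    using distributed_measurable[OF D] by simp
  show ?thesis
    using has_bochner_integral_real_indicator[of "{x \<in> space M. c < X x}" M]
      exponential_distributedD_gt[OF D c l] by (simp add: less_top[symmetric])
qed

lemma (in prob_space) exponential_distributed_tail_expectation:
  assumes D: "distributed M lborel X (exponential_density l)" and l: "0 < l" and c: "0 \<le> c"
  shows "has_bochner_integral M (\<lambda>x. if c < X x then X x else 0) ((c + 1 / l) * exp (- c * l))"
proof -
  have [measurable]: "X \<in> borel_measurable M"
    using distributed_measurable[OF D] by simp
  have "has_bochner_integral M (\<lambda>x. max 0 (X x - c) + c * indicator {x \<in> space M. c < X x} x)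
      (exp (- c * l) / l + c * exp (- c * l))"
    by (intro has_bochner_integral_add has_bochner_integral_mult_right
        exponential_distributed_excess[OF D l c] exponential_distributed_tail_indicator[OF D l c])
  then show ?thesis
    by (rule has_bochner_integral_cong[THEN iffD1, rotated -1])
       (auto simp: indicator_def max_def field_simps)
qed

lemma ln_one_plus_ge_sub_square:
  fixes y :: real
  assumes "0 \<le> y"
  shows "y - y\<^sup>2 \<le> ln (1 + y)"
proof (cases "y \<le> 1")
  case True
  then show ?thesis
    using ln_one_plus_pos_lower_bound[OF assms] by simp
next
  case False
  then have "y - y\<^sup>2 \<le> 0"
    by (simp add: power2_eq_square)
  also have "0 \<le> ln (1 + y)"
    using assms by simp
  finally show ?thesis .
qed

lemma ln_one_plus_mult_le_excess:
  fixes p a x c :: real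
  assumes "0 \<le> p" "p \<le> a" "0 \<le> x"
  shows "ln (1 + p * x) \<le> p * c + a * max 0 (x - c)"
proof -
  have "ln (1 + p * x) \<le> p * x"
    using assms by (intro ln_add_one_self_le_self) simp
  also have "p * x \<le> p * c + a * max 0 (x - c)"
  proof (cases "c \<le> x")
    case True
    then have "p * (x - c) \<le> a * (x - c)"
      using assms by (intro mult_right_mono) auto
    then show ?thesis
      using True by (simp add: algebra_simps)
  next
    case False
    then show ?thesis
      using assms by (simp add: mult_left_mono)
  qed
  finally show ?thesis .
qed

lemma tendsto_ratio_one_at_right_0:
  fixes f :: "real \<Rightarrow> real"
  assumes k: "0 < k"
    and lower: "\<And>s. 0 < s \<Longrightarrow> s * k - b * s\<^sup>2 \<le> f s"
    and upper: "\<And>s. 0 < s \<Longrightarrow> f s \<le> s * k"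
  shows "((\<lambda>s. f s / (s * k)) \<longlongrightarrow> 1) (at_right 0)"
proof (rule tendsto_sandwich)
  have pos: "eventually (\<lambda>s::real. 0 < s) (at_right 0)"
    by (simp add: eventually_at_right_less)
  show "eventually (\<lambda>s. 1 - b / k * s \<le> f s / (s * k)) (at_right 0)"
    using pos
  proof eventually_elim
    case (elim s)
    have "1 - b / k * s = (s * k - b * s\<^sup>2) / (s * k)"
      using elim k by (simp add: field_simps power2_eq_square)
    also have "\<dots> \<le> f s / (s * k)"
      using lower[OF elim] elim k by (intro divide_right_mono) auto
    finally show ?case .
  qed
  show "eventually (\<lambda>s. f s / (s * k) \<le> 1) (at_right 0)"
    using pos by eventually_elim (use upper k in simp)
  show "((\<lambda>s. 1 - b / k * s) \<longlongrightarrow> 1) (at_right 0)"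
    by (rule tendsto_eq_intros refl)+ simp
qed simp

definition threshold_power :: "real \<Rightarrow> real \<Rightarrow> complex \<Rightarrow> real" where
  "threshold_power A snr h = (if ln A < (cmod h)\<^sup>2 then A * snr else 0)"

locale rayleigh_channel = prob_space M for M :: "complex measure" +
  assumes gain_exponential: "distributed M lborel (\<lambda>h. (cmod h)\<^sup>2) (exponential_density 1)"
begin

lemma gain_measurable [measurable]: "(\<lambda>h. (cmod h)\<^sup>2) \<in> borel_measurable M"
  using distributed_measurable[OF gain_exponential] by simp

lemma expected_rate_le:
  assumes A: "1 \<le> A" and P: "P \<in> admissible_power M A snr"
  shows "(\<integral>h. ln (1 + P h * (cmod h)\<^sup>2) \<partial>M) \<le> snr * (1 + ln A)"
proof -
  from P have [measurable]: "P \<in> borel_measurable M" and P_nonneg: "\<And>h. 0 \<le> P h"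
    and P_peak: "\<And>h. P h \<le> A * snr" and P_avg: "(\<integral>h. P h \<partial>M) \<le> snr"
    by (auto simp: admissible_power_def)
  have P_int: "integrable M P"
    using P_nonneg P_peak by (intro integrable_const_bound[of _ "A * snr"]) auto
  have excess: "has_bochner_integral M (\<lambda>h. max 0 ((cmod h)\<^sup>2 - ln A)) (1 / A)"
    using exponential_distributed_excess[OF gain_exponential, of "ln A"] A
    by (simp add: exp_minus inverse_eq_divide)
  have "(\<integral>h. ln (1 + P h * (cmod h)\<^sup>2) \<partial>M)
      \<le> (\<integral>h. P h * ln A + A * snr * max 0 ((cmod h)\<^sup>2 - ln A) \<partial>M)"
  proof (rule integral_mono')
    show "integrable M (\<lambda>h. P h * ln A + A * snr * max 0 ((cmod h)\<^sup>2 - ln A))"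
      using P_int excess by (auto simp: has_bochner_integral_iff)
    fix h
    show "ln (1 + P h * (cmod h)\<^sup>2) \<le> P h * ln A + A * snr * max 0 ((cmod h)\<^sup>2 - ln A)"
      using P_nonneg P_peak by (intro ln_one_plus_mult_le_excess) auto
    show "0 \<le> P h * ln A + A * snr * max 0 ((cmod h)\<^sup>2 - ln A)"
      using P_nonneg[of h] P_peak[of h] A by simp
  qed
  also have "\<dots> = (\<integral>h. P h \<partial>M) * ln A + A * snr * (1 / A)"
    using P_int excess by (simp add: has_bochner_integral_iff)
  also have "\<dots> \<le> snr * ln A + snr"
    using P_avg A by (simp add: mult_right_mono)
  finally show ?thesis
    by (simp add: algebra_simps)
qed

lemma threshold_power_admissible:
  assumes A: "1 \<le> A" and snr: "0 \<le> snr"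
  shows "threshold_power A snr \<in> admissible_power M A snr"
proof -
  have tail: "has_bochner_integral M (indicator {h \<in> space M. ln A < (cmod h)\<^sup>2}) (1 / A)"
    using exponential_distributed_tail_indicator[OF gain_exponential, of "ln A"] A
    by (simp add: exp_minus inverse_eq_divide)
  have "has_bochner_integral M (threshold_power A snr) (A * snr * (1 / A))"
    using has_bochner_integral_mult_right[OF tail, of "A * snr"]
    by (rule has_bochner_integral_cong[THEN iffD1, rotated -1])
       (auto simp: threshold_power_def indicator_def)
  then have "(\<integral>h. threshold_power A snr h \<partial>M) = snr"
    using A by (simp add: has_bochner_integral_iff)
  moreover have "threshold_power A snr \<in> borel_measurable M"
    unfolding threshold_power_def by measurable
  moreover have "0 \<le> threshold_power A snr h" "threshold_power A snr h \<le> A * snr" for h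
    using A snr by (simp_all add: threshold_power_def)
  ultimately show ?thesis
    unfolding admissible_power_def by simp
qed

lemma expected_rate_threshold_power_ge:
  assumes A: "1 \<le> A" and snr: "0 \<le> snr"
  shows "snr * (1 + ln A) - 2 * A\<^sup>2 * snr\<^sup>2
    \<le> (\<integral>h. ln (1 + threshold_power A snr h * (cmod h)\<^sup>2) \<partial>M)"
proof -
  define g where "g h = (if ln A < (cmod h)\<^sup>2 then (cmod h)\<^sup>2 else 0)" for h
  have rate_eq: "threshold_power A snr h * (cmod h)\<^sup>2 = A * snr * g h" for h
    by (simp add: threshold_power_def g_def)
  have g_nonneg: "0 \<le> A * snr * g h" for h
    using A snr by (simp add: g_def)
  have tail: "has_bochner_integral M g ((ln A + 1) / A)"
    using exponential_distributed_tail_expectation[OF gain_exponential, of "ln A"] A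
    by (simp add: g_def[abs_def] exp_minus inverse_eq_divide)
  have square: "has_bochner_integral M (\<lambda>h. ((cmod h)\<^sup>2)\<^sup>2) 2"
    using has_bochner_integral_erlang_ith_moment[OF _ gain_exponential, of 2] by simp
  have rate_int: "integrable M (\<lambda>h. A * snr * g h)"
    using tail by (simp add: has_bochner_integral_iff)
  have "(\<integral>h. A * snr * g h - (A * snr)\<^sup>2 * ((cmod h)\<^sup>2)\<^sup>2 \<partial>M)
      \<le> (\<integral>h. ln (1 + A * snr * g h) \<partial>M)"
  proof (rule integral_mono)
    show "integrable M (\<lambda>h. A * snr * g h - (A * snr)\<^sup>2 * ((cmod h)\<^sup>2)\<^sup>2)"
      using rate_int square by (auto simp: has_bochner_integral_iff)
    show "integrable M (\<lambda>h. ln (1 + A * snr * g h))"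
    proof (rule Bochner_Integration.integrable_bound[OF rate_int])
      show "(\<lambda>h. ln (1 + A * snr * g h)) \<in> borel_measurable M"
        unfolding g_def by measurable
      show "AE h in M. norm (ln (1 + A * snr * g h)) \<le> norm (A * snr * g h)"
        using g_nonneg by (auto intro!: ln_add_one_self_le_self)
    qed
    fix h
    have "(A * snr * g h)\<^sup>2 \<le> (A * snr)\<^sup>2 * ((cmod h)\<^sup>2)\<^sup>2"
      by (simp add: g_def power_mult_distrib)
    then show "A * snr * g h - (A * snr)\<^sup>2 * ((cmod h)\<^sup>2)\<^sup>2 \<le> ln (1 + A * snr * g h)"
      using ln_one_plus_ge_sub_square[OF g_nonneg[of h]] by linarith
  qed
  also have "(\<integral>h. A * snr * g h - (A * snr)\<^sup>2 * ((cmod h)\<^sup>2)\<^sup>2 \<partial>M)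
      = A * snr * ((ln A + 1) / A) - (A * snr)\<^sup>2 * 2"
    using tail square rate_int by (simp add: has_bochner_integral_iff)
  also have "\<dots> = snr * (1 + ln A) - 2 * A\<^sup>2 * snr\<^sup>2"
    using A by (simp add: field_simps)
  finally show ?thesis
    by (simp add: rate_eq)
qed

lemma capacity_le:
  assumes "1 \<le> A" and "0 \<le> snr"
  shows "capacity M A snr \<le> snr * (1 + ln A)"
  unfolding capacity_def
  using assms threshold_power_admissible expected_rate_le by (blast intro: cSUP_least)

lemma capacity_ge:
  assumes "1 \<le> A" and "0 \<le> snr"
  shows "snr * (1 + ln A) - 2 * A\<^sup>2 * snr\<^sup>2 \<le> capacity M A snr"
proof -
  have "bdd_above ((\<lambda>P. \<integral>h. ln (1 + P h * (cmod h)\<^sup>2) \<partial>M) ` admissible_power M A snr)"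
    using expected_rate_le[OF assms(1)] by (intro bdd_aboveI2) auto
  then show ?thesis
    unfolding capacity_def
    using expected_rate_threshold_power_ge[OF assms] threshold_power_admissible[OF assms]
    by (blast intro: cSUP_upper2)
qed

end

theorem corollary2:
  fixes M :: "complex measure" and A :: real
  assumes "prob_space M"
    and "sets M = sets borel"
    and "distr M lborel (\<lambda>h. (cmod h)\<^sup>2) = density lborel (exponential_density 1)"
    and "1 \<le> A"
  shows "((\<lambda>snr. capacity M A snr / (snr * (1 + ln A))) \<longlongrightarrow> 1) (at_right 0)"
proof -
  have "(\<lambda>h. (cmod h)\<^sup>2) \<in> measurable M lborel"
    by (subst measurable_cong_sets[OF assms(2) refl]) simp
  then interpret rayleigh_channel M
    using assms(3)
    by (intro rayleigh_channel.intro rayleigh_channel_axioms.intro assms(1))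
       (simp add: distributed_def)
  show ?thesis
  proof (rule tendsto_ratio_one_at_right_0[where b = "2 * A\<^sup>2"])
    show "0 < 1 + ln A"
      using assms(4) by (simp add: add_pos_nonneg)
    fix snr :: real
    assume "0 < snr"
    then show "snr * (1 + ln A) - 2 * A\<^sup>2 * snr\<^sup>2 \<le> capacity M A snr"
      and "capacity M A snr \<le> snr * (1 + ln A)"
      using assms(4) by (simp_all add: capacity_ge capacity_le)
  qed
qed

end
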